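(* Let $\psi\in\Psi$ satisfy $\limsup_{t\to\infty}\frac{\psi(2t)}{\psi(t)}<2$. If $0\le x\in M_\psi$, then there exists a constant $c(x)\in\mathbb{N}$ such that $n_x\big(\frac{\psi(t)}{t}\big)\le c(x)t$ for every sufficiently large $t$.
   Context: $\Psi$ is the class of concave increasing functions $\psi$ on $[0,\infty)$ with $\psi(\infty)=\infty$, $\psi(t)=O(t)$ as $t\to0$, $\psi(t)=o(t)$ as $t\to\infty$. For bounded measurable $x$ on $(0,\infty)$, $n_x(\lambda)=m(\{s:|x(s)|>\lambda\})$ and $x^*$ is the nonincreasing right-continuous rearrangement of $|x|$. $M_\psi$ is the space of bounded measurable $x$ with $\sup_{t>0}\frac1{\psi(t)}\int_0^tx^*(s)ds<\infty$. *)

theory Defs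
  imports "HOL-Analysis.Analysis" "HOL-Library.Landau_Symbols"
begin

definition Psi_class :: "(real \<Rightarrow> real) set" where
  "Psi_class = {\<psi>. concave_on {0..} \<psi> \<and> mono_on {0..} \<psi>
      \<and> filterlim \<psi> at_top at_top
      \<and> \<psi> \<in> O[at_right 0](\<lambda>t. t)
      \<and> \<psi> \<in> o[at_top](\<lambda>t. t)}"

definition distr_fun :: "(real \<Rightarrow> real) \<Rightarrow> real \<Rightarrow> ennreal" where
  "distr_fun x l = emeasure lebesgue {s \<in> {0<..}. \<bar>x s\<bar> > l}"

definition rearr :: "(real \<Rightarrow> real) \<Rightarrow> real \<Rightarrow> real" where
  "rearr x t = Inf {l. l \<ge> 0 \<and> distr_fun x l \<le> ennreal t}"

definition bdd_meas :: "(real \<Rightarrow> real) \<Rightarrow> bool" where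
  "bdd_meas x \<longleftrightarrow> x \<in> borel_measurable (restrict_space lebesgue {0<..})
      \<and> (\<exists>B. \<forall>s>0. \<bar>x s\<bar> \<le> B)"

definition M_space :: "(real \<Rightarrow> real) \<Rightarrow> (real \<Rightarrow> real) set" where
  "M_space \<psi> = {x. bdd_meas x \<and>
      (\<exists>C::real. \<forall>t>0. (\<integral>\<^sup>+ s\<in>{0<..<t}. ennreal (rearr x s) \<partial>lebesgue)
                          \<le> ennreal (C * \<psi> t))}"

end

theory Submission
  imports Defs
begin

text \<open>Let \<open>C\<close> bound the averages of \<open>x\<^sup>*\<close> relative to \<open>\<psi>\<close>, so that \<open>s x\<^sup>*(s) \<le> C \<psi>(s)\<close>.
  Since \<open>\<psi>(2t) \<le> q \<psi>(t)\<close> for large \<open>t\<close> with some \<open>q < 2\<close>, choose \<open>k\<close> with \<open>C q\<^sup>k < 2\<^sup>k\<close>;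
  then \<open>s = 2\<^sup>k t\<close> gives \<open>x\<^sup>*(s) \<le> C q\<^sup>k \<psi>(t) / (2\<^sup>k t) < \<psi>(t)/t\<close>, and hence
  \<open>n\<^sub>x(\<psi>(t)/t) \<le> s = 2\<^sup>k t\<close>.\<close>

lemma bdd_meas_level_set_sets:
  assumes "bdd_meas x"
  shows "{s \<in> {0<..}. \<bar>x s\<bar> > l} \<in> sets lebesgue"
proof -
  have "x \<in> borel_measurable (restrict_space lebesgue {0<..})"
    using assms by (simp add: bdd_meas_def)
  then have "{s \<in> space (restrict_space lebesgue {0<..}). \<bar>x s\<bar> > l}
      \<in> sets (restrict_space lebesgue ({0<..}::real set))"
    by measurable
  then show ?thesis
    by (subst (asm) sets_restrict_space_iff) auto
qed

lemma distr_fun_antimono: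
  assumes "bdd_meas x" "l \<le> l'"
  shows "distr_fun x l' \<le> distr_fun x l"
  unfolding distr_fun_def
  by (rule emeasure_mono) (use assms bdd_meas_level_set_sets in auto)

lemma rearr_set_nonempty:
  assumes "bdd_meas x" "t \<ge> 0"
  shows "{l. l \<ge> 0 \<and> distr_fun x l \<le> ennreal t} \<noteq> {}"
proof -
  obtain B where B: "\<forall>s>0. \<bar>x s\<bar> \<le> B"
    using assms by (auto simp: bdd_meas_def)
  have "{s \<in> {0<..}. \<bar>x s\<bar> > max B 0} = {}"
    using B by force
  then have "distr_fun x (max B 0) = 0"
    by (simp only: distr_fun_def) simp
  then show ?thesis
    by (intro ex_in_conv[THEN iffD1] exI[of _ "max B 0"]) auto
qed

lemma rearr_nonneg:
  assumes "bdd_meas x" "t \<ge> 0"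
  shows "rearr x t \<ge> 0"
  unfolding rearr_def
  using rearr_set_nonempty[OF assms] by (intro cInf_greatest) auto

lemma rearr_antimono:
  assumes "bdd_meas x" "0 \<le> s" "s \<le> t"
  shows "rearr x t \<le> rearr x s"
  unfolding rearr_def
proof (rule cInf_superset_mono)
  show "{l. 0 \<le> l \<and> distr_fun x l \<le> ennreal s} \<noteq> {}"
    using rearr_set_nonempty[OF assms(1,2)] by simp
  show "bdd_below {l. 0 \<le> l \<and> distr_fun x l \<le> ennreal t}"
    by (rule bdd_belowI[of _ 0]) auto
  show "{l. 0 \<le> l \<and> distr_fun x l \<le> ennreal s} \<subseteq> {l. 0 \<le> l \<and> distr_fun x l \<le> ennreal t}"
    using assms by (auto intro: order_trans ennreal_leI)
qed

lemma distr_fun_le_if_rearr_less: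
  assumes "bdd_meas x" "s \<ge> 0" "rearr x s < l"
  shows "distr_fun x l \<le> ennreal s"
proof -
  obtain l' where "l' \<ge> 0" "distr_fun x l' \<le> ennreal s" "l' < l"
    using cInf_lessD[OF rearr_set_nonempty[OF assms(1,2)]] assms(3)
    by (auto simp: rearr_def)
  then show ?thesis
    using distr_fun_antimono[OF assms(1), of l' l] by simp
qed

lemma rearr_mult_le_nn_integral:
  assumes "bdd_meas x" "s > 0"
  shows "ennreal (s * rearr x s) \<le> (\<integral>\<^sup>+ u\<in>{0<..<s}. ennreal (rearr x u) \<partial>lebesgue)"
proof -
  have "ennreal (s * rearr x s) = ennreal (rearr x s) * emeasure lebesgue {0<..<s}"
    using assms rearr_nonneg[OF assms(1), of s] by (simp add: ennreal_mult mult.commute)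
  also have "\<dots> = (\<integral>\<^sup>+ u. ennreal (rearr x s) * indicator {0<..<s} u \<partial>lebesgue)"
    by (rule nn_integral_cmult_indicator[symmetric]) auto
  also have "\<dots> \<le> (\<integral>\<^sup>+ u\<in>{0<..<s}. ennreal (rearr x u) \<partial>lebesgue)"
    by (intro nn_integral_mono)
      (auto simp: indicator_def intro!: ennreal_leI rearr_antimono[OF assms(1)])
  finally show ?thesis .
qed

lemma M_space_rearr_bound:
  assumes "x \<in> M_space \<psi>"
  obtains C where "C > 0" "\<And>s. s > 0 \<Longrightarrow> \<psi> s \<ge> 0 \<Longrightarrow> s * rearr x s \<le> C * \<psi> s"
proof -
  have bm: "bdd_meas x"
    using assms by (simp add: M_space_def)
  obtain C where C: "\<And>t. t > 0 \<Longrightarrow>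
      (\<integral>\<^sup>+ u\<in>{0<..<t}. ennreal (rearr x u) \<partial>lebesgue) \<le> ennreal (C * \<psi> t)"
    using assms by (auto simp: M_space_def)
  have "s * rearr x s \<le> max C 1 * \<psi> s" if s: "s > 0" "\<psi> s \<ge> 0" for s
  proof -
    have "ennreal (s * rearr x s) \<le> ennreal (C * \<psi> s)"
      using rearr_mult_le_nn_integral[OF bm s(1)] C[OF s(1)] by (rule order_trans)
    also have "\<dots> \<le> ennreal (max C 1 * \<psi> s)"
      using s(2) by (intro ennreal_leI mult_right_mono) auto
    finally show ?thesis
      using s by (subst (asm) ennreal_le_iff) auto
  qed
  then show ?thesis
    using that[of "max C 1"] by simp
qed

lemma eventually_doubling_bound:
  fixes f :: "real \<Rightarrow> real"
  assumes "Limsup at_top (\<lambda>t. ereal (f (2 * t) / f t)) < 2"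
    and "filterlim f at_top at_top"
  obtains q T where "0 < q" "q < 2" "T > 0"
    "\<And>t. t \<ge> T \<Longrightarrow> f t > 0 \<and> f (2 * t) \<le> q * f t"
proof -
  obtain z where z: "Limsup at_top (\<lambda>t. ereal (f (2 * t) / f t)) < z" "z < 2"
    using assms(1) dense by blast
  then obtain r where r: "z = ereal r"
    by (cases z) auto
  define q where "q = max r 1"
  have "Limsup at_top (\<lambda>t. ereal (f (2 * t) / f t)) < ereal q"
    using z r by (auto simp: q_def intro: order.strict_trans2)
  from Limsup_lessD[OF this] have "\<forall>\<^sub>F t in at_top. f (2 * t) / f t < q"
    by simp
  moreover have "\<forall>\<^sub>F t in at_top. f t > 0"
    using assms(2) by (simp add: filterlim_at_top_dense)
  ultimately have "\<forall>\<^sub>F t in at_top. f (2 * t) / f t < q \<and> f t > 0"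
    by (rule eventually_conj)
  then obtain T0 where T0: "\<And>t. t \<ge> T0 \<Longrightarrow> f (2 * t) / f t < q \<and> f t > 0"
    by (auto simp: eventually_at_top_linorder)
  show ?thesis
  proof
    show "0 < q" "q < 2" "max T0 1 > 0"
      using z r by (auto simp: q_def)
    fix t assume "t \<ge> max T0 1"
    then show "f t > 0 \<and> f (2 * t) \<le> q * f t"
      using T0[of t] by (auto simp: divide_less_eq mult.commute)
  qed
qed

lemma le_two_power_mult:
  fixes t :: real
  assumes "t \<ge> 0"
  shows "t \<le> 2 ^ k * t"
  using mult_right_mono[of 1 "2 ^ k" t] assms by simp

lemma doubling_bound_iterate:
  fixes f :: "real \<Rightarrow> real"
  assumes "\<And>t. t \<ge> T \<Longrightarrow> f (2 * t) \<le> q * f t" "q \<ge> 0" "T \<ge> 0" "t \<ge> T"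
  shows "f (2 ^ k * t) \<le> q ^ k * f t"
proof (induction k)
  case 0
  then show ?case by simp
next
  case (Suc k)
  have "2 ^ k * t \<ge> T"
    using assms(3,4) le_two_power_mult[of t k] by linarith
  then have "f (2 * (2 ^ k * t)) \<le> q * f (2 ^ k * t)"
    by (rule assms(1))
  also have "\<dots> \<le> q * (q ^ k * f t)"
    using Suc assms(2) by (rule mult_left_mono)
  finally show ?case
    by (simp add: mult.assoc)
qed

theorem lemma3p1:
  fixes \<psi> x :: "real \<Rightarrow> real"
  assumes "\<psi> \<in> Psi_class"
    and "Limsup at_top (\<lambda>t. ereal (\<psi> (2 * t) / \<psi> t)) < 2"
    and "\<forall>s>0. x s \<ge> 0"
    and "x \<in> M_space \<psi>"
  shows "\<exists>c::nat. \<forall>\<^sub>F t in at_top. distr_fun x (\<psi> t / t) \<le> ennreal (real c * t)"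
proof -
  have bm: "bdd_meas x"
    using assms(4) by (simp add: M_space_def)
  obtain C where C: "C > 0" "\<And>s. s > 0 \<Longrightarrow> \<psi> s \<ge> 0 \<Longrightarrow> s * rearr x s \<le> C * \<psi> s"
    using M_space_rearr_bound[OF assms(4)] by blast
  obtain q T where q: "0 < q" "q < 2" "T > 0"
    and T: "\<And>t. t \<ge> T \<Longrightarrow> \<psi> t > 0 \<and> \<psi> (2 * t) \<le> q * \<psi> t"
    using eventually_doubling_bound[OF assms(2)] assms(1) by (auto simp: Psi_class_def)
  obtain k where "C < (2 / q) ^ k"
    using real_arch_pow[of "2 / q" C] q by auto
  then have k: "C * q ^ k < 2 ^ k"
    using q by (simp add: power_divide pos_less_divide_eq)
  have "distr_fun x (\<psi> t / t) \<le> ennreal (real (2 ^ k) * t)" if t: "t \<ge> T" for t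
  proof -
    have "t > 0"
      using t q by simp
    then have "2 ^ k * t \<ge> T"
      using t le_two_power_mult[of t k] by linarith
    then have "2 ^ k * t * rearr x (2 ^ k * t) \<le> C * \<psi> (2 ^ k * t)"
      using C(2) T \<open>t > 0\<close> by (simp add: less_imp_le)
    also have "\<dots> \<le> C * (q ^ k * \<psi> t)"
      using doubling_bound_iterate[of T \<psi> q t k] T q t C(1) by (simp add: less_imp_le)
    also have "\<dots> < 2 ^ k * \<psi> t"
      using k T[OF t] by (simp add: mult.assoc[symmetric])
    finally have "rearr x (2 ^ k * t) < \<psi> t / t"
      using q t by (simp add: pos_less_divide_eq mult.assoc mult.commute mult.left_commute)
    then show ?thesis
      using distr_fun_le_if_rearr_less[OF bm] q t by simp
  qed
  then show ?thesis
    by (intro exI[of _ "2 ^ k"]) (auto simp: eventually_at_top_linorder)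
qed

end
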